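(* Let $d\in\mathbb{N}$ and let $\alpha$ be an ordinal. Then $A_\alpha(\mathbb{N}_\omega^d)$ is the set of $d$-tuples in $\mathbb{N}_\omega^d$ having fewer than $\alpha$ components equal to $\omega$.
   Context: $\mathbb{N}_\omega=\mathbb{N}\cup\{\omega\}$ with $n\le\omega$ for all $n$, and $\mathbb{N}_\omega^d$ is ordered componentwise. In a partially ordered set $Z$, an acceleration candidate is a strictly increasing sequence $z_0<z_1<\cdots$; it goes through a set $A$ if some $z_i\in A$, and is below $z$ if $z_i\le z$ for all $i$. Define $A_0(Z)=\emptyset$ and, for an ordinal $\alpha>0$, $A_\alpha(Z)$ as the set of $z\in Z$ such that every acceleration candidate below $z$ goes through $A_\beta(Z)$ for some $\beta<\alpha$. *)

theory Defs
  imports Main "HOL-Library.Extended_Nat"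
begin

text \<open>N_omega is modelled by enat (omega = \<infinity>). N_omega^d is modelled as the set of
  functions nat => enat that vanish outside {0..<d}, ordered componentwise
  (the pointwise order on functions).\<close>

definition Nomega :: "nat \<Rightarrow> (nat \<Rightarrow> enat) set" where
  "Nomega d = {x. \<forall>i\<ge>d. x i = 0}"

definition acc_candidate :: "'a::order set \<Rightarrow> (nat \<Rightarrow> 'a) \<Rightarrow> bool" where
  "acc_candidate Z s \<longleftrightarrow> (\<forall>i. s i \<in> Z) \<and> (\<forall>i. s i < s (Suc i))"

definition goes_through :: "(nat \<Rightarrow> 'a) \<Rightarrow> 'a set \<Rightarrow> bool" where
  "goes_through s A \<longleftrightarrow> (\<exists>i. s i \<in> A)"

definition cand_below :: "(nat \<Rightarrow> 'a::order) \<Rightarrow> 'a \<Rightarrow> bool" where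
  "cand_below s z \<longleftrightarrow> (\<forall>i. s i \<le> z)"

text \<open>Ordinals are represented by elements of an arbitrary well-ordered type 'o;
  the ordinal denoted by alpha is the order type of {beta. beta < alpha}.\<close>

definition A_step :: "'a::order set \<Rightarrow> ('o::wellorder \<Rightarrow> 'a set) \<Rightarrow> 'o \<Rightarrow> 'a set" where
  "A_step Z R a = (if (\<forall>b. \<not> b < a) then {}
     else {z \<in> Z. \<forall>s. acc_candidate Z s \<and> cand_below s z \<longrightarrow>
                     (\<exists>b<a. goes_through s (R b))})"

definition A_level :: "'a::order set \<Rightarrow> 'o::wellorder \<Rightarrow> 'a set" where
  "A_level Z = wfrec {(b, a). b < a} (A_step Z)"

lemma A_level_eq:
  "A_level Z a = (if (\<forall>b. \<not> b < a) then {}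
     else {z \<in> Z. \<forall>s. acc_candidate Z s \<and> cand_below s z \<longrightarrow>
                     (\<exists>b<a. goes_through s (A_level Z b))})"
proof -
  have wf: "wf {(b, a::'b). b < a}" using wf by (simp add: wf_def)
  show ?thesis
    apply (subst A_level_def)
    apply (subst wfrec[OF wf])
    apply (simp add: A_step_def A_level_def)
    apply (intro impI Collect_cong conj_cong refl all_cong imp_cong ex_cong)
    apply (auto simp: cut_apply)
    done
qed

text \<open>A natural number c is below the ordinal represented by alpha (c < alpha as
  ordinals, naturals being the finite ordinals) iff alpha has more than c
  predecessors.\<close>

definition nat_less_ord :: "nat \<Rightarrow> 'o::wellorder \<Rightarrow> bool" where
  "nat_less_ord c a \<longleftrightarrow> infinite {b. b < a} \<or> c < card {b. b < a}"

definition omega_count :: "nat \<Rightarrow> (nat \<Rightarrow> enat) \<Rightarrow> nat" where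
  "omega_count d x = card {i. i < d \<and> x i = \<infinity>}"

end

theory Submission
  imports Defs
begin

text \<open>A point of \<open>\<nat>\<^sub>\<omega>\<^sup>d\<close> with \<open>k\<close> components equal to \<open>\<omega>\<close> has only finitely many
  points below it with the same \<open>\<omega>\<close>-components, so an acceleration candidate below it
  must eventually, hence everywhere, have fewer \<open>\<omega>\<close>-components; with the induction hypothesis
  it therefore passes through \<open>A\<^sub>\<beta>\<close> whenever some \<open>\<beta> < \<alpha>\<close> has more than \<open>k - 1\<close>
  predecessors. Conversely, replacing one \<open>\<omega>\<close>-component by \<open>0, 1, 2, \<dots>\<close> gives an
  acceleration candidate whose members have exactly \<open>k - 1\<close> components \<open>\<omega>\<close>, which forces
  \<open>k < \<alpha>\<close>.\<close>

lemma not_nat_less_ord_if_minimal: "(\<forall>b. \<not> b < a) \<Longrightarrow> \<not> nat_less_ord n a"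
  by (simp add: nat_less_ord_def)

lemma nat_less_ord_0: "b < a \<Longrightarrow> nat_less_ord 0 a"
  unfolding nat_less_ord_def by (auto simp: card_gt_0_iff)

lemma nat_less_ord_antimono: "m \<le> n \<Longrightarrow> nat_less_ord n a \<Longrightarrow> nat_less_ord m a"
  unfolding nat_less_ord_def by auto

lemma nat_less_ord_SucI:
  assumes "b < a" and "nat_less_ord n b"
  shows "nat_less_ord (Suc n) a"
proof (cases "finite {c. c < a}")
  case True
  have sub: "insert b {c. c < b} \<subseteq> {c. c < a}"
    using \<open>b < a\<close> by (auto intro: less_trans)
  then have fin: "finite {c. c < b}"
    using finite_subset[OF _ True] by auto
  have "Suc (card {c. c < b}) \<le> card {c. c < a}"
    using card_mono[OF True sub] fin by simp
  moreover have "n < card {c. c < b}"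
    using assms(2) fin by (simp add: nat_less_ord_def)
  ultimately show ?thesis
    by (simp add: nat_less_ord_def)
qed (simp add: nat_less_ord_def)

lemma nat_less_ord_SucD:
  fixes a :: "'o::wellorder"
  assumes "nat_less_ord (Suc n) a"
  obtains b where "b < a" and "nat_less_ord n b"
proof -
  obtain S where S: "finite S" "card S = Suc (Suc n)" "S \<subseteq> {c. c < a}"
  proof (cases "finite {c. c < a}")
    case True
    with assms have "Suc (Suc n) \<le> card {c. c < a}"
      by (simp add: nat_less_ord_def)
    then obtain T where "T \<subseteq> {c. c < a}" "card T = Suc (Suc n)" "finite T"
      by (rule obtain_subset_with_card_n)
    with that show ?thesis
      by blast
  next
    case False
    with that show ?thesis
      using infinite_arbitrarily_large by blast
  qed
  define b where "b = Max S"
  have "S \<noteq> {}"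
    using S(2) by auto
  then have "b \<in> S"
    unfolding b_def using S(1) by simp
  have sub: "S - {b} \<subseteq> {c. c < b}"
    unfolding b_def using S(1) by (auto simp: order.not_eq_order_implies_strict)
  have card: "card (S - {b}) = Suc n"
    using S(2) \<open>b \<in> S\<close> by simp
  have "nat_less_ord n b"
  proof (cases "finite {c. c < b}")
    case True
    then show ?thesis
      using card_mono[OF True sub] card by (simp add: nat_less_ord_def)
  qed (simp add: nat_less_ord_def)
  moreover have "b < a"
    using \<open>b \<in> S\<close> S(3) by blast
  ultimately show ?thesis
    using that by blast
qed

definition omega_coords :: "nat \<Rightarrow> (nat \<Rightarrow> enat) \<Rightarrow> nat set" where
  "omega_coords d x = {i. i < d \<and> x i = \<infinity>}"

lemma finite_omega_coords [simp]: "finite (omega_coords d x)"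
  by (simp add: omega_coords_def)

lemma omega_count_eq_card: "omega_count d x = card (omega_coords d x)"
  by (simp add: omega_count_def omega_coords_def)

lemma omega_coords_mono: "x \<le> y \<Longrightarrow> omega_coords d x \<subseteq> omega_coords d y"
proof
  fix i
  assume "x \<le> y" and "i \<in> omega_coords d x"
  then have "\<infinity> \<le> y i" and "i < d"
    by (auto simp: omega_coords_def le_fun_def dest: spec[of _ i])
  then show "i \<in> omega_coords d y"
    by (simp add: omega_coords_def)
qed

lemma finite_Nomega_below_same_omega_coords:
  "finite {y \<in> Nomega d. y \<le> z \<and> omega_coords d y = omega_coords d z}"
proof -
  define B where "B = insert \<infinity> (\<Union>i<d. {v. v \<le> z i \<and> z i \<noteq> \<infinity>})"
  have "finite {v. v \<le> z i \<and> z i \<noteq> \<infinity>}" for i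
    by (cases "z i") (auto intro: finite_enat_bounded)
  then have "finite B"
    by (simp add: B_def)
  have "y i \<in> B" if "y \<le> z" "omega_coords d y = omega_coords d z" "i < d" for y i
  proof (cases "y i = \<infinity>")
    case False
    moreover have "i \<in> omega_coords d y \<longleftrightarrow> i \<in> omega_coords d z"
      using that(2) by simp
    ultimately have "z i \<noteq> \<infinity>"
      using that(3) unfolding omega_coords_def mem_Collect_eq by metis
    then show ?thesis
      using that(1,3) unfolding B_def le_fun_def by blast
  qed (simp add: B_def)
  then have "{y \<in> Nomega d. y \<le> z \<and> omega_coords d y = omega_coords d z}
          \<subseteq> {f. \<forall>i. (i \<in> {..<d} \<longrightarrow> f i \<in> B) \<and> (i \<notin> {..<d} \<longrightarrow> f i = 0)}"
    by (auto simp: Nomega_def)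
  then show ?thesis
    using finite_set_of_finite_funs[OF finite_lessThan \<open>finite B\<close>] finite_subset by blast
qed

lemma acc_candidate_strict_mono: "acc_candidate Z s \<Longrightarrow> strict_mono s"
  by (simp add: acc_candidate_def strict_mono_Suc_iff)

text \<open>A strictly increasing sequence cannot stay in a finite set, so it cannot keep all the
  \<open>\<omega>\<close>-components of its upper bound.\<close>

lemma omega_count_less_if_cand_below:
  assumes acc: "acc_candidate (Nomega d) s" and below: "cand_below s z"
  shows "omega_count d (s i) < omega_count d z"
proof (rule ccontr)
  assume not_less: "\<not> ?thesis"
  have le_z: "s j \<le> z" for j
    using below by (simp add: cand_below_def)
  then have "omega_coords d (s i) = omega_coords d z"
    using card_seteq[OF finite_omega_coords omega_coords_mono[OF le_z]] not_less
    by (simp add: omega_count_eq_card)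
  then have "omega_coords d (s (i + j)) = omega_coords d z" for j
    using omega_coords_mono[OF le_z] omega_coords_mono[of "s i" "s (i + j)" d]
      strict_mono_less_eq[OF acc_candidate_strict_mono[OF acc]] by fastforce
  then have "range (\<lambda>j. s (i + j)) \<subseteq> {y \<in> Nomega d. y \<le> z \<and> omega_coords d y = omega_coords d z}"
    using acc le_z by (auto simp: acc_candidate_def)
  then have "finite (range (\<lambda>j. s (i + j)))"
    using finite_Nomega_below_same_omega_coords finite_subset by blast
  moreover have "inj (\<lambda>j. s (i + j))"
    using strict_mono_eq[OF acc_candidate_strict_mono[OF acc]] by (auto intro: injI)
  ultimately show False
    using finite_imageD by blast
qed

lemma acc_candidate_replace_omega:
  assumes "x \<in> Nomega d" and "j < d" and "x j = \<infinity>"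
  shows "acc_candidate (Nomega d) (\<lambda>n. x(j := enat n))"
    and "cand_below (\<lambda>n. x(j := enat n)) x"
    and "Suc (omega_count d (x(j := enat n))) = omega_count d x"
proof -
  show "acc_candidate (Nomega d) (\<lambda>n. x(j := enat n))"
    using assms by (auto simp: acc_candidate_def Nomega_def less_fun_def le_fun_def)
  show "cand_below (\<lambda>n. x(j := enat n)) x"
    using assms by (simp add: cand_below_def le_fun_def)
  have "omega_coords d (x(j := enat n)) = omega_coords d x - {j}"
    by (auto simp: omega_coords_def)
  moreover have "j \<in> omega_coords d x"
    using assms by (simp add: omega_coords_def)
  ultimately show "Suc (omega_count d (x(j := enat n))) = omega_count d x"
    unfolding omega_count_eq_card by (metis card_Suc_Diff1 finite_omega_coords)
qed

lemma cand_below_goes_through_lower_level: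
  assumes IH: "\<And>b. b < a \<Longrightarrow>
      A_level (Nomega d) b = {x \<in> Nomega d. nat_less_ord (omega_count d x) b}"
    and x: "nat_less_ord (omega_count d x) a"
    and s: "acc_candidate (Nomega d) s" "cand_below s x"
  shows "\<exists>b<a. goes_through s (A_level (Nomega d) b)"
proof -
  have "Suc (omega_count d (s 0)) \<le> omega_count d x"
    using omega_count_less_if_cand_below[OF s] by (simp add: Suc_le_eq)
  then have "nat_less_ord (Suc (omega_count d (s 0))) a"
    using x by (rule nat_less_ord_antimono)
  then obtain b where "b < a" "nat_less_ord (omega_count d (s 0)) b"
    by (rule nat_less_ord_SucD)
  moreover have "s 0 \<in> Nomega d"
    using s(1) by (simp add: acc_candidate_def)
  ultimately show ?thesis
    using IH unfolding goes_through_def by blast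
qed

lemma nat_less_ord_if_all_cand_below_go_through:
  assumes IH: "\<And>b. b < a \<Longrightarrow>
      A_level (Nomega d) b = {x \<in> Nomega d. nat_less_ord (omega_count d x) b}"
    and "b0 < a" and x: "x \<in> Nomega d"
    and through: "\<And>s. acc_candidate (Nomega d) s \<Longrightarrow> cand_below s x \<Longrightarrow>
      \<exists>b<a. goes_through s (A_level (Nomega d) b)"
  shows "nat_less_ord (omega_count d x) a"
proof (cases "omega_count d x")
  case 0
  then show ?thesis
    using nat_less_ord_0[OF \<open>b0 < a\<close>] by simp
next
  case (Suc k)
  then have "omega_coords d x \<noteq> {}"
    by (auto simp: omega_count_eq_card)
  then obtain j where j: "j < d" "x j = \<infinity>"
    by (auto simp: omega_coords_def)
  note replace = acc_candidate_replace_omega[OF x j]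
  obtain b n where "b < a" "x(j := enat n) \<in> A_level (Nomega d) b"
    using through[OF replace(1,2)] by (auto simp: goes_through_def)
  then have "nat_less_ord k b"
    using IH replace(3)[of n] Suc by auto
  then show ?thesis
    using nat_less_ord_SucI[OF \<open>b < a\<close>] Suc by simp
qed

lemma all_cand_below_go_through_iff:
  assumes IH: "\<And>b. b < a \<Longrightarrow>
      A_level (Nomega d) b = {x \<in> Nomega d. nat_less_ord (omega_count d x) b}"
    and "b0 < a" and "x \<in> Nomega d"
  shows "(\<forall>s. acc_candidate (Nomega d) s \<and> cand_below s x
            \<longrightarrow> (\<exists>b<a. goes_through s (A_level (Nomega d) b)))
         \<longleftrightarrow> nat_less_ord (omega_count d x) a"
proof
  assume "\<forall>s. acc_candidate (Nomega d) s \<and> cand_below s x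
            \<longrightarrow> (\<exists>b<a. goes_through s (A_level (Nomega d) b))"
  then show "nat_less_ord (omega_count d x) a"
    using nat_less_ord_if_all_cand_below_go_through[OF IH assms(2,3)] by blast
qed (blast intro: cand_below_goes_through_lower_level[OF IH])

theorem proposition23:
  fixes d :: nat and \<alpha> :: "'o::wellorder"
  shows "A_level (Nomega d) \<alpha> = {x \<in> Nomega d. nat_less_ord (omega_count d x) \<alpha>}"
proof (induction \<alpha> rule: less_induct)
  case (less a)
  show ?case
  proof (cases "\<forall>b. \<not> b < a")
    case True
    then show ?thesis
      by (subst A_level_eq) (simp add: not_nat_less_ord_if_minimal)
  next
    case False
    then obtain b0 where "b0 < a"
      by blast
    have "A_level (Nomega d) a = {x \<in> Nomega d. \<forall>s. acc_candidate (Nomega d) s \<and> cand_below s x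
              \<longrightarrow> (\<exists>b<a. goes_through s (A_level (Nomega d) b))}"
      by (subst A_level_eq) (simp only: if_not_P[OF False])
    also have "\<dots> = {x \<in> Nomega d. nat_less_ord (omega_count d x) a}"
      by (simp cong: conj_cong add: all_cand_below_go_through_iff[OF less \<open>b0 < a\<close>])
    finally show ?thesis .
  qed
qed

end
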